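(* For every integer $k\ge 2$, $$\bigl|\zeta(k)-1-h(k)\bigr|=C(k)\le\frac13\left(1+\frac{2}{3k-1}\right)\frac{2^{-3k}}{1-2^{-2k}},$$ where $h(k)=\sum_{n=2}^{\infty}\operatorname{arctanh}(n^{-k})$ and $C(k)=\sum_{n=1}^{\infty}\frac{\zeta(k(2n+1))-1}{2n+1}$. In particular $C(k)=O(2^{-3k})$ as $k\to\infty$.
   Context: $\zeta$ denotes the Riemann zeta function. *)

theory Defs
  imports "HOL-Analysis.Analysis" "HOL-Library.Landau_Symbols"
begin

definition zeta :: "real \<Rightarrow> real" where
  "zeta s = (\<Sum>n. 1 / (real (Suc n)) powr s)"

definition h :: "nat \<Rightarrow> real" where
  "h k = (\<Sum>n. artanh (1 / real (n + 2) ^ k))"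

text \<open>C k = sum over n >= 1 of (zeta (k(2n+1)) - 1)/(2n+1); index shifted n = m + 1.\<close>
definition C :: "nat \<Rightarrow> real" where
  "C k = (\<Sum>m. (zeta (real (k * (2 * m + 3))) - 1) / real (2 * m + 3))"

end

theory Submission
  imports Defs
begin

(* Expanding artanh x - x = sum over m of x^(2m+3)/(2m+3) at x = n^(-k) and summing over n >= 2,
   the double series of nonnegative terms may be summed in the other order, which gives
   h(k) = zeta(k) - 1 + C(k).  For the bound, each n^(-s) with n >= 3 is at most the
   telescoping difference ((n-1)^(1-s) - n^(1-s))/(s-1), so zeta(s) - 1 <= (1 + 2/(s-1)) 2^(-s);
   with s = k(2m+3) >= 3k and 2m+3 >= 3 the terms of C(k) are then dominated by a geometric
   series of ratio 2^(-2k). *)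

lemma artanh_sums:
  fixes x :: real
  assumes "\<bar>x\<bar> < 1"
  shows "(\<lambda>j. x ^ (2*j+1) / real (2*j+1)) sums artanh x"
proof -
  define f where "f n = (x^n - (-x)^n) / (2 * real n)" for n
  have "(\<lambda>n. (- ((-x)^n) / real n - (- (x^n)) / real n) / 2) sums ((ln (1 + x) - ln (1 - x)) / 2)"
    using ln_series'[of x] ln_series'[of "-x"] assms by (intro sums_divide sums_diff) auto
  moreover have "ln (1 + x) - ln (1 - x) = ln ((1 + x) / (1 - x))"
    using assms by (simp add: ln_div abs_less_iff)
  moreover have "(\<lambda>n. (- ((-x)^n) / real n - (- (x^n)) / real n) / 2) = f"
    by (simp add: f_def fun_eq_iff diff_divide_distrib)
  ultimately have "f sums artanh x"
    by (simp add: artanh_def)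
  moreover have "f n = 0" if "n \<notin> range (\<lambda>j. 2*j+1)" for n
  proof -
    have "even n"
      using that by (metis oddE rangeI)
    then show ?thesis
      by (simp add: f_def)
  qed
  ultimately have "(\<lambda>j. f (2*j+1)) sums artanh x"
    by (subst sums_mono_reindex) (auto simp: strict_mono_def)
  moreover have "f (2*j+1) = x ^ (2*j+1) / real (2*j+1)" for j
    by (simp add: f_def field_simps)
  ultimately show ?thesis
    by simp
qed

lemma artanh_minus_self_sums:
  fixes x :: real
  assumes "\<bar>x\<bar> < 1"
  shows "(\<lambda>m. x ^ (2*m+3) / real (2*m+3)) sums (artanh x - x)"
  using sums_Suc_iff[of "\<lambda>j. x ^ (2*j+1) / real (2*j+1)"] artanh_sums[OF assms]
  by (simp add: eval_nat_numeral)

lemma inverse_power_diff_ge: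
  fixes a :: real
  assumes "0 < a"
  shows "real t / (a+1) ^ (t+1) \<le> 1 / a ^ t - 1 / (a+1) ^ t"
proof -
  have "1 + real t / (a+1) \<le> 1 + real t * (1/a)"
    using assms by (simp add: frac_le)
  also have "\<dots> \<le> (1 + 1/a) ^ t"
    using assms by (intro Bernoulli_inequality) (simp add: order.trans[of _ 0])
  also have "\<dots> = (a+1) ^ t / a ^ t"
    using assms by (simp add: field_simps)
  finally have "real t / (a+1) \<le> (a+1) ^ t / a ^ t - 1"
    by simp
  then have "real t / (a+1) / (a+1) ^ t \<le> ((a+1) ^ t / a ^ t - 1) / (a+1) ^ t"
    using assms by (intro divide_right_mono) auto
  then show ?thesis
    using assms by (simp add: field_simps)
qed

lemma nonneg_double_sums_swap:
  fixes a :: "nat \<Rightarrow> nat \<Rightarrow> real"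
  assumes nonneg: "\<And>m n. 0 \<le> a m n"
    and rows: "\<And>m. (\<lambda>n. a m n) sums g m" and "summable g"
    and cols: "\<And>n. (\<lambda>m. a m n) sums r n"
  shows "r sums suminf g"
proof -
  have rows': "((\<lambda>n. a m n) has_sum g m) UNIV" for m
    using rows nonneg by (rule sums_nonneg_imp_has_sum)
  have "0 \<le> g m" for m
    using nonneg sums_zero rows by (rule sums_le)
  then have g_sum: "(g has_sum suminf g) UNIV"
    using \<open>summable g\<close> by (intro sums_nonneg_imp_has_sum summable_sums)
  have "(\<lambda>(m, n). a m n) summable_on UNIV \<times> UNIV"
    using summable_on_SigmaI[where A = UNIV and B = "\<lambda>_. UNIV" and f = "\<lambda>(m, n). a m n" and g = g]
      rows' g_sum nonneg by (simp add: has_sum_imp_summable)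
  then have "((\<lambda>(m, n). a m n) has_sum suminf g) (UNIV \<times> UNIV)"
    using has_sum_SigmaI[where A = UNIV and B = "\<lambda>_. UNIV" and f = "\<lambda>(m, n). a m n" and g = g]
      rows' g_sum by simp
  then have "((\<lambda>(n, m). a m n) has_sum suminf g) (UNIV \<times> UNIV)"
    by (subst (asm) has_sum_swap) (simp add: case_prod_unfold)
  moreover have "((\<lambda>m. a m n) has_sum r n) UNIV" for n
    using cols nonneg by (rule sums_nonneg_imp_has_sum)
  ultimately have "(r has_sum suminf g) UNIV"
    using has_sum_SigmaD[where A = UNIV and B = "\<lambda>_. UNIV" and f = "\<lambda>(n, m). a m n"] by simp
  then show ?thesis
    by (rule has_sum_imp_sums)
qed

lemma powr_neg_numeral_mult:
  fixes x :: real
  assumes "0 < x"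
  shows "x powr (- numeral c * real k) = 1 / x ^ (numeral c * k)"
proof -
  have "- numeral c * real k = - real (numeral c * k)"
    by simp
  then show ?thesis
    by (simp only: powr_minus_divide powr_realpow[OF assms])
qed

lemma zeta_minus_one_sums:
  assumes "2 \<le> s"
  shows "(\<lambda>n. 1 / real (n+2) ^ s) sums (zeta (real s) - 1)"
proof -
  have "summable (\<lambda>n. 1 / real (Suc n) ^ s)"
    using inverse_power_summable[of s] assms
    by (subst summable_Suc_iff) (simp add: divide_inverse)
  then have "(\<lambda>n. 1 / real (Suc n) ^ s) sums zeta (real s)"
    by (simp add: zeta_def powr_realpow summable_sums)
  then show ?thesis
    using sums_Suc_iff[of "\<lambda>n. 1 / real (Suc n) ^ s"] by (simp add: add.commute)
qed

lemma zeta_minus_one_nonneg: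
  assumes "2 \<le> s"
  shows "0 \<le> zeta (real s) - 1"
  by (rule sums_le[OF _ sums_zero zeta_minus_one_sums[OF assms]]) simp

lemma zeta_minus_one_le:
  assumes "2 \<le> s"
  shows "zeta (real s) - 1 \<le> (1 + 2 / (real s - 1)) / 2 ^ s"
proof -
  define t where "t = s - 1"
  have s_eq: "s = t + 1" and "1 \<le> t"
    using assms by (auto simp: t_def)
  define T where "T n = 1 / (real t * real (n+2) ^ t)" for n
  have "(\<lambda>n. inverse (real (n+2))) \<longlonglongrightarrow> 0"
    using LIMSEQ_ignore_initial_segment[OF LIMSEQ_inverse_real_of_nat, of 1] by (simp add: add.commute)
  then have "(\<lambda>n. inverse (real t) * inverse (real (n+2)) ^ t) \<longlonglongrightarrow> inverse (real t) * 0 ^ t"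
    by (intro tendsto_intros)
  moreover have "(\<lambda>n. inverse (real t) * inverse (real (n+2)) ^ t) = T"
    by (simp add: T_def fun_eq_iff power_inverse divide_inverse)
  ultimately have "T \<longlonglongrightarrow> inverse (real t) * 0 ^ t"
    by (simp only:)
  then have "T \<longlonglongrightarrow> 0"
    using \<open>1 \<le> t\<close> by (simp add: power_0_left)
  then have telescope: "(\<lambda>n. T n - T (Suc n)) sums T 0"
    using telescope_sums'[of T 0] by simp
  have "1 / real (n+3) ^ s \<le> T n - T (Suc n)" for n
  proof -
    have "real t / real (n+3) ^ s \<le> 1 / real (n+2) ^ t - 1 / real (n+3) ^ t"
      using inverse_power_diff_ge[of "real (n+2)" t] by (simp add: s_eq add_ac)
    then have "real t / real (n+3) ^ s / real t \<le> (1 / real (n+2) ^ t - 1 / real (n+3) ^ t) / real t"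
      by (rule divide_right_mono) simp
    then show ?thesis
      using \<open>1 \<le> t\<close> by (simp add: T_def diff_divide_distrib ac_simps)
  qed
  moreover have "(\<lambda>n. 1 / real (n+3) ^ s) sums (zeta (real s) - 1 - 1 / 2 ^ s)"
    using sums_Suc_iff[of "\<lambda>n. 1 / real (n+2) ^ s"] zeta_minus_one_sums[OF assms]
    by (simp add: add_ac)
  ultimately have "zeta (real s) - 1 - 1 / 2 ^ s \<le> T 0"
    using telescope by (rule sums_le)
  also have "T 0 = 2 / ((real s - 1) * 2 ^ s)"
    by (simp add: T_def s_eq)
  finally show ?thesis
    by (simp add: add_divide_distrib)
qed

lemma C_term_nonneg:
  assumes "1 \<le> k"
  shows "0 \<le> (zeta (real (k * (2*m+3))) - 1) / real (2*m+3)"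
proof -
  have "2 \<le> k * (2*m+3)"
    using assms by (simp add: algebra_simps)
  from zeta_minus_one_nonneg[OF this] show ?thesis
    by simp
qed

lemma C_term_le:
  assumes "1 \<le> k"
  shows "(zeta (real (k * (2*m+3))) - 1) / real (2*m+3)
           \<le> (1 + 2 / (3 * real k - 1)) / (3 * 2 ^ (3*k)) * (1 / 2 ^ (2*k)) ^ m"
proof -
  define s where "s = k * (2*m+3)"
  have "3 * k \<le> s"
    unfolding s_def by simp
  then have "2 \<le> s"
    using assms by linarith
  have "(zeta (real s) - 1) / real (2*m+3) \<le> (zeta (real s) - 1) / 3"
    using zeta_minus_one_nonneg[OF \<open>2 \<le> s\<close>] by (intro divide_left_mono) auto
  also have "\<dots> \<le> (1 + 2 / (real s - 1)) / 2 ^ s / 3"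
    using zeta_minus_one_le[OF \<open>2 \<le> s\<close>] by (intro divide_right_mono) auto
  also have "\<dots> \<le> (1 + 2 / (3 * real k - 1)) / 2 ^ s / 3"
    using \<open>3 * k \<le> s\<close> assms by (intro divide_right_mono divide_left_mono add_left_mono) auto
  also have "(2::real) ^ s = 2 ^ (3*k) * (2 ^ (2*k)) ^ m"
    by (simp add: s_def algebra_simps flip: power_add power_mult)
  finally show ?thesis
    by (simp add: s_def power_one_over mult_ac)
qed

lemma C_sums:
  assumes "1 \<le> k"
  shows "(\<lambda>m. (zeta (real (k * (2*m+3))) - 1) / real (2*m+3)) sums C k"
proof -
  have "summable (\<lambda>m. (1 + 2 / (3 * real k - 1)) / (3 * 2 ^ (3*k)) * (1 / 2 ^ (2*k) :: real) ^ m)"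
    using assms by (intro summable_mult summable_geometric) auto
  then have "summable (\<lambda>m. (zeta (real (k * (2*m+3))) - 1) / real (2*m+3))"
  proof (rule summable_comparison_test')
    fix m :: nat
    show "norm ((zeta (real (k * (2*m+3))) - 1) / real (2*m+3))
                 \<le> (1 + 2 / (3 * real k - 1)) / (3 * 2 ^ (3*k)) * (1 / 2 ^ (2*k)) ^ m"
      using C_term_le[OF assms, of m] C_term_nonneg[OF assms, of m] by simp
  qed
  then show ?thesis
    unfolding C_def by (rule summable_sums)
qed

lemma C_nonneg:
  assumes "1 \<le> k"
  shows "0 \<le> C k"
  using C_term_nonneg[OF assms] sums_zero C_sums[OF assms] by (rule sums_le)

lemma C_le:
  assumes "1 \<le> k"
  shows "C k \<le> (1/3) * (1 + 2 / (3 * real k - 1)) * ((1 / 2 ^ (3*k)) / (1 - 1 / 2 ^ (2*k)))"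
proof -
  have "(1 / 2 ^ (2*k) :: real) < 1"
    using assms by simp
  then have "(\<lambda>m. (1 + 2 / (3 * real k - 1)) / (3 * 2 ^ (3*k)) * (1 / 2 ^ (2*k)) ^ m)
               sums ((1 + 2 / (3 * real k - 1)) / (3 * 2 ^ (3*k)) * (1 / (1 - 1 / 2 ^ (2*k))))"
    by (intro sums_mult geometric_sums) simp
  with C_term_le[OF assms] C_sums[OF assms]
  have "C k \<le> (1 + 2 / (3 * real k - 1)) / (3 * 2 ^ (3*k)) * (1 / (1 - 1 / 2 ^ (2*k)))"
    by (rule sums_le)
  then show ?thesis
    by simp
qed

lemma C_le_two_power:
  assumes "1 \<le> k"
  shows "C k \<le> 4/3 * (1 / 2 ^ (3*k))"
proof -
  have "2 / (3 * real k - 1) \<le> 1"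
    using assms by simp
  moreover have "(1 / 2 ^ (3*k)) / (1 - 1 / 2 ^ (2*k)) \<le> 2 * (1 / 2 ^ (3*k) :: real)"
  proof -
    have "(2::real) ^ 1 \<le> 2 ^ (2*k)"
      using assms by (intro power_increasing) auto
    then show ?thesis
      by (simp add: field_simps)
  qed
  moreover have "0 \<le> 2 / (3 * real k - 1)"
    using assms by simp
  ultimately have "(1/3) * (1 + 2 / (3 * real k - 1)) * ((1 / 2 ^ (3*k)) / (1 - 1 / 2 ^ (2*k)))
                     \<le> (1/3) * 2 * (2 * (1 / 2 ^ (3*k)))"
    by (intro mult_mono) auto
  with C_le[OF assms] show ?thesis
    by simp
qed

lemma h_eq_zeta_minus_one_plus_C:
  assumes "2 \<le> k"
  shows "h k = zeta (real k) - 1 + C k"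
proof -
  define x where "x n = 1 / real (n+2) ^ k" for n
  have "\<bar>x n\<bar> < 1" for n
  proof -
    have "1 < real (n+2) ^ k"
      using assms by (intro one_less_power) auto
    then show ?thesis
      by (simp add: x_def)
  qed
  have "(\<lambda>n. artanh (x n) - x n) sums C k"
    unfolding C_def
  proof (rule nonneg_double_sums_swap[where a = "\<lambda>m n. x n ^ (2*m+3) / real (2*m+3)"])
    show "0 \<le> x n ^ (2*m+3) / real (2*m+3)" for m n
      by (simp add: x_def)
    show "(\<lambda>n. x n ^ (2*m+3) / real (2*m+3)) sums ((zeta (real (k * (2*m+3))) - 1) / real (2*m+3))" for m
    proof -
      have "2 \<le> k * (2*m+3)"
        using assms by (simp add: algebra_simps)
      then have "(\<lambda>n. 1 / real (n+2) ^ (k * (2*m+3)) / real (2*m+3))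
                   sums ((zeta (real (k * (2*m+3))) - 1) / real (2*m+3))"
        by (intro sums_divide zeta_minus_one_sums)
      moreover have "(\<lambda>n. x n ^ (2*m+3) / real (2*m+3)) = (\<lambda>n. 1 / real (n+2) ^ (k * (2*m+3)) / real (2*m+3))"
        by (simp add: x_def power_one_over power_mult)
      ultimately show ?thesis
        by (simp only:)
    qed
    show "summable (\<lambda>m. (zeta (real (k * (2*m+3))) - 1) / real (2*m+3))"
      using assms by (intro sums_summable[OF C_sums]) simp
    show "(\<lambda>m. x n ^ (2*m+3) / real (2*m+3)) sums (artanh (x n) - x n)" for n
      using artanh_minus_self_sums \<open>\<bar>x n\<bar> < 1\<close> .
  qed
  moreover have "x sums (zeta (real k) - 1)"
    unfolding x_def using assms by (rule zeta_minus_one_sums)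
  ultimately have "(\<lambda>n. (artanh (x n) - x n) + x n) sums (C k + (zeta (real k) - 1))"
    by (rule sums_add)
  then show ?thesis
    by (simp add: h_def x_def sums_iff)
qed

theorem theorem5p2:
  shows "(\<forall>k::nat. k \<ge> 2 \<longrightarrow>
            \<bar>zeta (real k) - 1 - h k\<bar> = C k \<and>
            C k \<le> (1/3) * (1 + 2 / (3 * real k - 1)) * (2 powr (- 3 * real k) / (1 - 2 powr (- 2 * real k))))
         \<and> C \<in> O(\<lambda>k. 2 powr (- 3 * real k))"
proof (intro conjI allI impI)
  fix k :: nat
  assume "k \<ge> 2"
  then show "\<bar>zeta (real k) - 1 - h k\<bar> = C k"
    using h_eq_zeta_minus_one_plus_C C_nonneg by simp
  show "C k \<le> (1/3) * (1 + 2 / (3 * real k - 1)) * (2 powr (- 3 * real k) / (1 - 2 powr (- 2 * real k)))"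
    using C_le \<open>k \<ge> 2\<close> unfolding powr_neg_numeral_mult[OF zero_less_numeral] by simp
next
  have "\<forall>\<^sub>F k in at_top. norm (C k) \<le> 4/3 * norm ((2::real) powr (- 3 * real k))"
    using eventually_ge_at_top[of 1]
    unfolding powr_neg_numeral_mult[OF zero_less_numeral]
  proof eventually_elim
    case (elim k)
    then show ?case
      using C_nonneg[OF elim] C_le_two_power[OF elim] by simp
  qed
  then show "C \<in> O(\<lambda>k. 2 powr (- 3 * real k))"
    by (rule bigoI)
qed

end
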